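(* Let $(V,F)$ be a near vector space with $(F,\circ)$ commutative. Then $(V,F)$ is regular if and only if for any $u\in Q(V)\setminus\{0\}$, $V$ is a vector space over the field $(F,+_u,\circ)$ (with scalar multiplication given by the action of $F$ on $V$); in the regular case all the operations $+_u$, $u\in Q(V)\setminus\{0\}$, coincide.
   Context: An F-group is a pair $(V,F)$ where $(V,+)$ is a group and $F$ is a set of endomorphisms of $V$ such that: the maps $0,1,-1$ lie in $F$; $F\setminus\{0\}$ is a subgroup of $\mathrm{Aut}(V,+)$ under composition; and if $\alpha x=\beta x$ with $\alpha,\beta\in F$, $x\in V$ then $\alpha=\beta$ or $x=0$. The quasi-kernel $Q(V)$ is the set of $u\in V$ such that for all $\alpha,\beta\in F$ there is $\gamma\in F$ with $\alpha u+\beta u=\gamma u$. $(V,F)$ is a near vector space if $Q(V)$ generates $(V,+)$. Commutativity means $\alpha(\beta v)=\beta(\alpha v)$ for all $\alpha,\beta\in F$, $v\in V$. For $u\in Q(V)\setminus\{0\}$, $\alpha+_u\beta$ denotes the unique $\gamma$ with $\alpha u+\beta u=\gamma u$; when $F$ is commutative, $(F,+_u,\circ)$ is a field. Elements $u,v\in Q(V)$ are compatible if there is $\lambda\in F\setminus\{0\}$ with $u+\lambda v\in Q(V)$; $V$ is regular if all elements of $Q(V)\setminus\{0\}$ are pairwise compatible. *)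

theory Defs
  imports "HOL-Algebra.Module"
begin

text \<open>The group (V,+) is the type 'v with its (not necessarily abelian) group structure;
  F is a set of maps 'v => 'v.\<close>

definition endo :: "('v::group_add \<Rightarrow> 'v) \<Rightarrow> bool" where
  "endo f \<longleftrightarrow> (\<forall>x y. f (x + y) = f x + f y)"

definition F_group :: "('v::group_add \<Rightarrow> 'v) set \<Rightarrow> bool" where
  "F_group F \<longleftrightarrow>
     (\<forall>f\<in>F. endo f) \<and>
     (\<lambda>x. 0) \<in> F \<and> id \<in> F \<and> uminus \<in> F \<and>
     (\<forall>f\<in>F - {\<lambda>x. 0}. bij f) \<and>
     (\<forall>f\<in>F - {\<lambda>x. 0}. \<forall>g\<in>F - {\<lambda>x. 0}. f \<circ> g \<in> F - {\<lambda>x. 0}) \<and>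
     (\<forall>f\<in>F - {\<lambda>x. 0}. inv_into UNIV f \<in> F - {\<lambda>x. 0}) \<and>
     (\<forall>\<alpha>\<in>F. \<forall>\<beta>\<in>F. \<forall>x. \<alpha> x = \<beta> x \<longrightarrow> \<alpha> = \<beta> \<or> x = 0)"

definition quasi_kernel :: "('v::group_add \<Rightarrow> 'v) set \<Rightarrow> 'v set" where
  "quasi_kernel F = {u. \<forall>\<alpha>\<in>F. \<forall>\<beta>\<in>F. \<exists>\<gamma>\<in>F. \<alpha> u + \<beta> u = \<gamma> u}"

definition gen_subgroup :: "'v::group_add set \<Rightarrow> 'v set" where
  "gen_subgroup S = \<Inter>{H. 0 \<in> H \<and> (\<forall>x\<in>H. \<forall>y\<in>H. x + y \<in> H) \<and> (\<forall>x\<in>H. - x \<in> H) \<and> S \<subseteq> H}"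

definition near_vector_space :: "('v::group_add \<Rightarrow> 'v) set \<Rightarrow> bool" where
  "near_vector_space F \<longleftrightarrow> F_group F \<and> gen_subgroup (quasi_kernel F) = UNIV"

definition F_commutative :: "('v \<Rightarrow> 'v) set \<Rightarrow> bool" where
  "F_commutative F \<longleftrightarrow> (\<forall>\<alpha>\<in>F. \<forall>\<beta>\<in>F. \<forall>v. \<alpha> (\<beta> v) = \<beta> (\<alpha> v))"

definition plus_u :: "('v::group_add \<Rightarrow> 'v) set \<Rightarrow> 'v \<Rightarrow> ('v \<Rightarrow> 'v) \<Rightarrow> ('v \<Rightarrow> 'v) \<Rightarrow> ('v \<Rightarrow> 'v)" where
  "plus_u F u \<alpha> \<beta> = (THE \<gamma>. \<gamma> \<in> F \<and> \<alpha> u + \<beta> u = \<gamma> u)"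

definition compatible :: "('v::group_add \<Rightarrow> 'v) set \<Rightarrow> 'v \<Rightarrow> 'v \<Rightarrow> bool" where
  "compatible F u v \<longleftrightarrow> (\<exists>l\<in>F - {\<lambda>x. 0}. u + l v \<in> quasi_kernel F)"

definition regular :: "('v::group_add \<Rightarrow> 'v) set \<Rightarrow> bool" where
  "regular F \<longleftrightarrow> (\<forall>u\<in>quasi_kernel F - {0}. \<forall>v\<in>quasi_kernel F - {0}. compatible F u v)"

definition scalar_ring :: "('v::group_add \<Rightarrow> 'v) set \<Rightarrow> 'v \<Rightarrow> ('v \<Rightarrow> 'v) ring" where
  "scalar_ring F u = \<lparr>carrier = F, mult = (\<circ>), one = id, zero = (\<lambda>x. 0), add = plus_u F u\<rparr>"

text \<open>(V,+) with scalar multiplication given by the action of F on V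
  (the multiplicative monoid fields of V are irrelevant for modules).\<close>
definition action_module :: "('v::group_add \<Rightarrow> 'v, 'v) module" where
  "action_module = \<lparr>carrier = UNIV, mult = (\<lambda>x y. undefined), one = undefined,
                    zero = 0, add = (+), smult = (\<lambda>a v. a v)\<rparr>"

definition vector_space_over_u :: "('v::group_add \<Rightarrow> 'v) set \<Rightarrow> 'v \<Rightarrow> bool" where
  "vector_space_over_u F u \<longleftrightarrow> field (scalar_ring F u) \<and> module (scalar_ring F u) action_module"

end

theory Submission
  imports Defs
begin

text \<open>Since \<open>-1 \<in> F\<close> is an endomorphism, \<open>(V,+)\<close> is abelian. By commutativity of \<open>F\<close>, the
  operation \<open>\<alpha> +\<^sub>v \<beta>\<close> acts as \<open>\<alpha> + \<beta>\<close> on the whole orbit \<open>F v\<close> of \<open>v \<in> Q(V)\<close>, so \<open>+\<^sub>u = +\<^sub>v\<close>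
  whenever \<open>u \<in> F v\<close>. If \<open>w = u + \<lambda> v \<in> Q(V)\<close>, pick \<open>\<gamma> \<in> F\<close> with \<open>\<gamma> w = \<alpha> w + \<beta> w\<close>; expanding
  both sides gives \<open>\<gamma> u - (\<alpha> +\<^sub>u \<beta>) u = (\<alpha> +\<^sub>v \<beta>) (\<lambda> v) - \<gamma> (\<lambda> v)\<close>, i.e. \<open>\<zeta> u = \<eta> (\<lambda> v)\<close> with
  \<open>\<zeta>, \<eta> \<in> F\<close>. Either \<open>\<zeta> = \<eta> = 0\<close>, which forces \<open>\<alpha> +\<^sub>u \<beta> = \<gamma> = \<alpha> +\<^sub>v \<beta>\<close>, or \<open>u\<close> lies in the orbit
  of \<open>v\<close>. Hence in a regular space \<open>\<alpha> +\<^sub>u \<beta>\<close> agrees with \<open>\<alpha> + \<beta>\<close> on \<open>Q(V)\<close>, hence on the group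
  it generates, which is \<open>V\<close>; this pointwise sum makes \<open>V\<close> a vector space over \<open>(F, +\<^sub>u, \<circ>)\<close>.
  Conversely, distributivity of the scalar multiplication puts every vector into \<open>Q(V)\<close>, and then
  any two vectors are compatible via \<open>\<lambda> = 1\<close>.\<close>

lemma endo_zero: "endo f \<Longrightarrow> f 0 = (0::'v::group_add)"
  unfolding endo_def by (metis add_0 add_right_cancel)

lemma endo_minus: "endo f \<Longrightarrow> f (- x) = - f (x::'v::group_add)"
  unfolding endo_def by (metis add.right_inverse endo_def endo_zero minus_unique)

lemma gen_subgroup_least:
  assumes "0 \<in> H" "\<forall>x\<in>H. \<forall>y\<in>H. x + y \<in> H" "\<forall>x\<in>H. - x \<in> H" "S \<subseteq> H"
  shows "gen_subgroup S \<subseteq> H"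
  using assms unfolding gen_subgroup_def by blast

lemma quasi_kernel_UNIV_if_vector_space_over_u:
  fixes F :: "('v::group_add \<Rightarrow> 'v) set"
  assumes "vector_space_over_u F u"
  shows "quasi_kernel F = UNIV"
proof -
  have M: "module (scalar_ring F u) (action_module :: ('v \<Rightarrow> 'v, 'v) module)"
    and R: "cring (scalar_ring F u)"
    using assms module.axioms(1) unfolding vector_space_over_u_def by blast+
  have "\<exists>\<gamma>\<in>F. \<alpha> x + \<beta> x = \<gamma> x" if "\<alpha> \<in> F" "\<beta> \<in> F" for \<alpha> \<beta> and x :: 'v
  proof (intro bexI)
    show "plus_u F u \<alpha> \<beta> \<in> F"
      using cring.cring_simprules(1)[OF R, of \<alpha> \<beta>] that by (simp add: scalar_ring_def)
    show "\<alpha> x + \<beta> x = plus_u F u \<alpha> \<beta> x"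
      using module.smult_l_distr[OF M, of \<alpha> \<beta> x] that
      by (simp add: scalar_ring_def action_module_def)
  qed
  then show ?thesis unfolding quasi_kernel_def by blast
qed

locale F_group_struct =
  fixes F :: "('v::group_add \<Rightarrow> 'v) set"
  assumes F_group: "F_group F"
begin

lemma F_group_props:
  "\<forall>f\<in>F. endo f" "(\<lambda>x. 0) \<in> F" "id \<in> F" "uminus \<in> F"
  "\<forall>f\<in>F - {\<lambda>x. 0}. bij f"
  "\<forall>f\<in>F - {\<lambda>x. 0}. \<forall>g\<in>F - {\<lambda>x. 0}. f \<circ> g \<in> F - {\<lambda>x. 0}"
  "\<forall>f\<in>F - {\<lambda>x. 0}. inv_into UNIV f \<in> F - {\<lambda>x. 0}"
  "\<forall>\<alpha>\<in>F. \<forall>\<beta>\<in>F. \<forall>x. \<alpha> x = \<beta> x \<longrightarrow> \<alpha> = \<beta> \<or> x = 0"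
  using F_group unfolding F_group_def by simp_all

lemma F_add: "f \<in> F \<Longrightarrow> f (x + y) = f x + f y"
  using F_group_props(1) unfolding endo_def by blast

lemma F_zero: "f \<in> F \<Longrightarrow> f 0 = 0"
  using F_group_props(1) endo_zero by blast

lemma F_minus: "f \<in> F \<Longrightarrow> f (- x) = - f x"
  using F_group_props(1) endo_minus by blast

lemma zero_in_F: "(\<lambda>x. 0) \<in> F" and id_in_F: "id \<in> F" and uminus_in_F: "uminus \<in> F"
  using F_group_props(2-4) .

lemma comp_in_F:
  assumes "f \<in> F" "g \<in> F"
  shows "f \<circ> g \<in> F"
proof (cases "f = (\<lambda>x. 0) \<or> g = (\<lambda>x. 0)")
  case True
  then have "f \<circ> g = (\<lambda>x. 0)" using F_zero assms(1) by (auto simp: comp_def)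
  then show ?thesis using zero_in_F by simp
next
  case False
  then show ?thesis using F_group_props(6) assms by blast
qed

lemma inv_in_F: "f \<in> F \<Longrightarrow> f \<noteq> (\<lambda>x. 0) \<Longrightarrow> inv_into UNIV f \<in> F"
  using F_group_props(7) by blast

lemma bij_F: "f \<in> F \<Longrightarrow> f \<noteq> (\<lambda>x. 0) \<Longrightarrow> bij f"
  using F_group_props(5) by blast

lemma F_eq_if_app_eq: "\<alpha> \<in> F \<Longrightarrow> \<beta> \<in> F \<Longrightarrow> \<alpha> x = \<beta> x \<Longrightarrow> x \<noteq> 0 \<Longrightarrow> \<alpha> = \<beta>"
  using F_group_props(8) by blast

lemma F_eq_zero_if_app_eq_zero: "f \<in> F \<Longrightarrow> f x = 0 \<Longrightarrow> x \<noteq> 0 \<Longrightarrow> f = (\<lambda>x. 0)"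
  using F_eq_if_app_eq zero_in_F by blast

lemma add_commute: "(x::'v) + y = y + x"
proof -
  have "x + y = - (- y + - x)" by (simp add: minus_add)
  also have "\<dots> = y + x" using F_add[OF uminus_in_F, of "- y" "- x"] by simp
  finally show ?thesis .
qed

lemma minus_add_distrib: "- ((x::'v) + y) = - x + - y"
  using F_add[OF uminus_in_F] by simp

sublocale V: abel_semigroup "(+) :: 'v \<Rightarrow> 'v \<Rightarrow> 'v"
  by unfold_locales (simp_all add: add.assoc add_commute)

lemma F_diff: "f \<in> F \<Longrightarrow> f (x - y) = f x - f y"
  by (simp only: diff_conv_add_uminus F_add F_minus)

lemma diff_eq_diff_if_add_eq:
  assumes "(a::'v) + b = c + d"
  shows "a - c = d - b"
proof -
  have "a - c = c + d - b - c" using assms add_diff_cancel[of a b] by simp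
  also have "\<dots> = c + (d - b) - c" by (simp add: add_diff_eq)
  also have "\<dots> = d - b" using V.commute[of c "d - b"] by simp
  finally show ?thesis .
qed

lemma plus_u_eqI:
  assumes "u \<noteq> 0" "\<gamma> \<in> F" "\<gamma> u = \<alpha> u + \<beta> u"
  shows "plus_u F u \<alpha> \<beta> = \<gamma>"
  unfolding plus_u_def using assms F_eq_if_app_eq by (intro the_equality) auto

lemma plus_u_in_F_and_apply:
  assumes "u \<in> quasi_kernel F" "u \<noteq> 0" "\<alpha> \<in> F" "\<beta> \<in> F"
  shows "plus_u F u \<alpha> \<beta> \<in> F \<and> plus_u F u \<alpha> \<beta> u = \<alpha> u + \<beta> u"
proof -
  obtain \<gamma> where "\<gamma> \<in> F" "\<alpha> u + \<beta> u = \<gamma> u"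
    using assms unfolding quasi_kernel_def by blast
  then show ?thesis using plus_u_eqI assms(2) by simp
qed

lemma quasi_kernel_diff:
  assumes "u \<in> quasi_kernel F" "\<gamma> \<in> F" "\<delta> \<in> F"
  obtains \<zeta> where "\<zeta> \<in> F" "\<zeta> u = \<gamma> u - \<delta> u"
proof -
  have "uminus \<circ> \<delta> \<in> F" using comp_in_F uminus_in_F assms(3) by blast
  then obtain \<zeta> where \<zeta>: "\<zeta> \<in> F" "\<gamma> u + (uminus \<circ> \<delta>) u = \<zeta> u"
    using assms(1,2) unfolding quasi_kernel_def by blast
  from \<zeta>(2) have "\<zeta> u = \<gamma> u - \<delta> u" by simp
  then show thesis by (rule that[OF \<zeta>(1)])
qed

lemma app_eq_app_cases:
  assumes "\<zeta> \<in> F" "\<eta> \<in> F" "v \<noteq> 0" "\<zeta> u = \<eta> v"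
  shows "(\<zeta> = (\<lambda>x. 0) \<and> \<eta> = (\<lambda>x. 0)) \<or> (\<exists>\<mu>\<in>F. u = \<mu> v)"
proof (cases "\<zeta> = (\<lambda>x. 0)")
  case True
  then have "\<eta> v = 0" using assms(4) by simp
  then show ?thesis using True F_eq_zero_if_app_eq_zero assms(2,3) by blast
next
  case False
  have "u = inv_into UNIV \<zeta> (\<eta> v)"
    using assms(4) bij_F[OF assms(1) False] by (metis bij_is_inj inv_f_f)
  then have "u = (inv_into UNIV \<zeta> \<circ> \<eta>) v" by simp
  moreover have "inv_into UNIV \<zeta> \<circ> \<eta> \<in> F" using inv_in_F comp_in_F assms False by blast
  ultimately show ?thesis by blast
qed

lemma sum_eq_if_sum_eq_on_generators:
  assumes "gen_subgroup (quasi_kernel F) = UNIV" "\<alpha> \<in> F" "\<beta> \<in> F" "\<gamma> \<in> F"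
    and "\<forall>x\<in>quasi_kernel F. \<gamma> x = \<alpha> x + \<beta> x"
  shows "\<gamma> x = \<alpha> x + \<beta> x"
proof -
  let ?H = "{x. \<gamma> x = \<alpha> x + \<beta> x}"
  have "gen_subgroup (quasi_kernel F) \<subseteq> ?H"
    using assms(2-) by (intro gen_subgroup_least)
      (auto simp: F_zero F_add F_minus minus_add_distrib add.assoc V.commute V.left_commute)
  then show ?thesis using assms(1) by blast
qed

lemma regular_if_quasi_kernel_UNIV:
  assumes "quasi_kernel F = UNIV"
  shows "regular F"
  unfolding regular_def compatible_def
proof (intro ballI)
  fix u v assume "u \<in> quasi_kernel F - {0}" and v: "v \<in> quasi_kernel F - {0}"
  have "id \<noteq> (\<lambda>x. 0 :: 'v)" using v fun_cong[of id "\<lambda>x. 0" v] by auto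
  then have "id \<in> F - {\<lambda>x. 0}" using id_in_F by simp
  moreover have "u + id v \<in> quasi_kernel F" using assms by simp
  ultimately show "\<exists>l\<in>F - {\<lambda>x. 0}. u + l v \<in> quasi_kernel F" by blast
qed

lemma abelian_group_action_module: "abelian_group (action_module :: ('v \<Rightarrow> 'v, 'v) module)"
  by (rule abelian_groupI)
    (auto simp: action_module_def add.assoc V.commute V.left_commute intro: exI[of _ "- x" for x])

lemma regular_if_vector_space_over_u:
  assumes "\<forall>u\<in>quasi_kernel F - {0}. vector_space_over_u F u"
  shows "regular F"
proof (cases "quasi_kernel F - {0} = {}")
  case True
  then show ?thesis unfolding regular_def by blast
next
  case False
  then show ?thesis
    using assms quasi_kernel_UNIV_if_vector_space_over_u regular_if_quasi_kernel_UNIV by blast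
qed

end

locale comm_F_group_struct = F_group_struct +
  assumes F_commutative: "F_commutative F"
begin

lemma F_comm: "\<alpha> \<in> F \<Longrightarrow> \<beta> \<in> F \<Longrightarrow> \<alpha> (\<beta> x) = \<beta> (\<alpha> x)"
  using F_commutative unfolding F_commutative_def by blast

lemma plus_u_apply_orbit:
  assumes "v \<in> quasi_kernel F" "v \<noteq> 0" "\<mu> \<in> F" "\<alpha> \<in> F" "\<beta> \<in> F"
  shows "plus_u F v \<alpha> \<beta> (\<mu> v) = \<alpha> (\<mu> v) + \<beta> (\<mu> v)"
proof -
  have \<epsilon>: "plus_u F v \<alpha> \<beta> \<in> F" "plus_u F v \<alpha> \<beta> v = \<alpha> v + \<beta> v"
    using plus_u_in_F_and_apply[OF assms(1,2,4,5)] by auto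
  have "plus_u F v \<alpha> \<beta> (\<mu> v) = \<mu> (plus_u F v \<alpha> \<beta> v)" using F_comm \<epsilon>(1) assms(3) by blast
  also have "\<dots> = \<mu> (\<alpha> v) + \<mu> (\<beta> v)" using \<epsilon>(2) F_add[OF assms(3)] by simp
  also have "\<dots> = \<alpha> (\<mu> v) + \<beta> (\<mu> v)" using F_comm assms(3-5) by metis
  finally show ?thesis .
qed

lemma plus_u_eq_if_in_orbit:
  assumes "v \<in> quasi_kernel F" "v \<noteq> 0" "\<mu> \<in> F" "\<mu> v \<noteq> 0" "\<alpha> \<in> F" "\<beta> \<in> F"
  shows "plus_u F (\<mu> v) \<alpha> \<beta> = plus_u F v \<alpha> \<beta>"
  using plus_u_eqI[OF assms(4)] plus_u_in_F_and_apply[OF assms(1,2,5,6)]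
    plus_u_apply_orbit[OF assms(1,2,3,5,6)] by blast

lemma plus_u_eq_if_compatible:
  assumes u: "u \<in> quasi_kernel F" "u \<noteq> 0" and v: "v \<in> quasi_kernel F" "v \<noteq> 0"
    and "compatible F u v" and \<alpha>\<beta>: "\<alpha> \<in> F" "\<beta> \<in> F"
  shows "plus_u F u \<alpha> \<beta> = plus_u F v \<alpha> \<beta>"
proof -
  obtain l where l: "l \<in> F" "l \<noteq> (\<lambda>x. 0)" and w: "u + l v \<in> quasi_kernel F"
    using assms(5) unfolding compatible_def by blast
  have lv: "l v \<noteq> 0" using F_eq_zero_if_app_eq_zero[OF l(1)] l(2) v(2) by blast
  define \<delta> where "\<delta> = plus_u F u \<alpha> \<beta>"
  define \<epsilon> where "\<epsilon> = plus_u F v \<alpha> \<beta>"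
  have \<delta>: "\<delta> \<in> F" "\<delta> u = \<alpha> u + \<beta> u"
    using plus_u_in_F_and_apply[OF u \<alpha>\<beta>] \<delta>_def by auto
  have \<epsilon>: "\<epsilon> \<in> F" "\<epsilon> (l v) = \<alpha> (l v) + \<beta> (l v)"
    using plus_u_in_F_and_apply[OF v \<alpha>\<beta>] plus_u_apply_orbit[OF v l(1) \<alpha>\<beta>] \<epsilon>_def by auto
  obtain \<gamma> where \<gamma>: "\<gamma> \<in> F" "\<alpha> (u + l v) + \<beta> (u + l v) = \<gamma> (u + l v)"
    using w \<alpha>\<beta> unfolding quasi_kernel_def by blast
  have "\<gamma> u + \<gamma> (l v) = (\<alpha> u + \<beta> u) + (\<alpha> (l v) + \<beta> (l v))"
    using \<gamma> \<alpha>\<beta> by (simp add: F_add add.assoc V.commute V.left_commute)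
  then have "\<gamma> u - \<delta> u = \<epsilon> (l v) - \<gamma> (l v)"
    using \<delta>(2) \<epsilon>(2) by (simp add: diff_eq_diff_if_add_eq)
  moreover obtain \<zeta> where \<zeta>: "\<zeta> \<in> F" "\<zeta> u = \<gamma> u - \<delta> u"
    using quasi_kernel_diff[OF u(1) \<gamma>(1) \<delta>(1)] .
  moreover obtain \<eta> where \<eta>: "\<eta> \<in> F" "\<eta> v = \<epsilon> v - \<gamma> v"
    using quasi_kernel_diff[OF v(1) \<epsilon>(1) \<gamma>(1)] .
  moreover have "\<eta> (l v) = \<epsilon> (l v) - \<gamma> (l v)"
    using \<eta> \<epsilon>(1) \<gamma>(1) l(1) by (metis F_comm F_diff)
  ultimately have "\<zeta> u = \<eta> (l v)" by simp
  then consider "\<zeta> = (\<lambda>x. 0)" "\<eta> = (\<lambda>x. 0)" | \<mu> where "\<mu> \<in> F" "u = \<mu> (l v)"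
    using app_eq_app_cases[OF \<zeta>(1) \<eta>(1) lv] by blast
  then show ?thesis
  proof cases
    case 1
    then have "\<gamma> u = \<delta> u" "\<epsilon> (l v) = \<gamma> (l v)"
      using \<zeta>(2) \<open>\<eta> (l v) = \<epsilon> (l v) - \<gamma> (l v)\<close> by simp_all
    then show ?thesis
      using F_eq_if_app_eq \<gamma>(1) \<delta>(1) \<epsilon>(1) u(2) lv \<delta>_def \<epsilon>_def by metis
  next
    case 2
    then have "\<mu> \<circ> l \<in> F" "u = (\<mu> \<circ> l) v" using comp_in_F l(1) by auto
    then show ?thesis using plus_u_eq_if_in_orbit[OF v] u(2) \<alpha>\<beta> by blast
  qed
qed

lemma regular_plus_u_eq:
  assumes "regular F" "u \<in> quasi_kernel F" "u \<noteq> 0" "v \<in> quasi_kernel F" "v \<noteq> 0"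
    and "\<alpha> \<in> F" "\<beta> \<in> F"
  shows "plus_u F u \<alpha> \<beta> = plus_u F v \<alpha> \<beta>"
  using assms plus_u_eq_if_compatible unfolding regular_def by blast

lemma regular_plus_u_pointwise:
  assumes "gen_subgroup (quasi_kernel F) = UNIV" "regular F"
    and u: "u \<in> quasi_kernel F" "u \<noteq> 0" and \<alpha>\<beta>: "\<alpha> \<in> F" "\<beta> \<in> F"
  shows "plus_u F u \<alpha> \<beta> = (\<lambda>x. \<alpha> x + \<beta> x)"
proof
  fix x
  have "plus_u F u \<alpha> \<beta> y = \<alpha> y + \<beta> y" if y: "y \<in> quasi_kernel F" for y
  proof (cases "y = 0")
    case True
    then show ?thesis using plus_u_in_F_and_apply[OF u \<alpha>\<beta>] \<alpha>\<beta> by (simp add: F_zero)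
  next
    case False
    then show ?thesis
      using regular_plus_u_eq[OF assms(2) u y False \<alpha>\<beta>] plus_u_in_F_and_apply[OF y False \<alpha>\<beta>] by simp
  qed
  then show "plus_u F u \<alpha> \<beta> x = \<alpha> x + \<beta> x"
    using sum_eq_if_sum_eq_on_generators assms(1) \<alpha>\<beta> plus_u_in_F_and_apply[OF u \<alpha>\<beta>] by blast
qed

context
  fixes u
  assumes u: "u \<in> quasi_kernel F" "u \<noteq> 0"
    and plus_u_pointwise: "\<And>\<alpha> \<beta>. \<alpha> \<in> F \<Longrightarrow> \<beta> \<in> F \<Longrightarrow> plus_u F u \<alpha> \<beta> = (\<lambda>x. \<alpha> x + \<beta> x)"
begin

lemma plus_u_in_F: "\<alpha> \<in> F \<Longrightarrow> \<beta> \<in> F \<Longrightarrow> plus_u F u \<alpha> \<beta> \<in> F"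
  using plus_u_in_F_and_apply[OF u] by blast

lemma plus_u_apply: "\<alpha> \<in> F \<Longrightarrow> \<beta> \<in> F \<Longrightarrow> plus_u F u \<alpha> \<beta> x = \<alpha> x + \<beta> x"
  using plus_u_pointwise by simp

lemma cring_scalar_ring: "cring (scalar_ring F u)"
proof -
  have "abelian_group (scalar_ring F u)"
  proof (rule abelian_groupI)
    fix \<alpha> assume \<alpha>: "\<alpha> \<in> carrier (scalar_ring F u)"
    then have "uminus \<circ> \<alpha> \<in> F" using comp_in_F uminus_in_F by (simp add: scalar_ring_def)
    then show "\<exists>\<beta>\<in>carrier (scalar_ring F u). \<beta> \<oplus>\<^bsub>scalar_ring F u\<^esub> \<alpha> = \<zero>\<^bsub>scalar_ring F u\<^esub>"
      using \<alpha> by (intro bexI[of _ "uminus \<circ> \<alpha>"]) (simp_all add: scalar_ring_def plus_u_pointwise)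
  qed (simp_all add: scalar_ring_def plus_u_in_F zero_in_F fun_eq_iff plus_u_apply
      add.assoc V.commute V.left_commute)
  moreover have "comm_monoid (scalar_ring F u)"
    by (rule comm_monoidI)
      (auto simp: scalar_ring_def comp_in_F id_in_F o_assoc fun_eq_iff F_comm)
  ultimately show ?thesis
    by (rule cringI) (simp add: scalar_ring_def plus_u_apply comp_in_F fun_eq_iff)
qed

lemma field_scalar_ring: "field (scalar_ring F u)"
proof (rule cring.cring_fieldI2[OF cring_scalar_ring])
  show "\<zero>\<^bsub>scalar_ring F u\<^esub> \<noteq> \<one>\<^bsub>scalar_ring F u\<^esub>"
    using u(2) fun_cong[of "\<lambda>x. 0" id u] by (auto simp: scalar_ring_def)
next
  fix \<alpha> assume "\<alpha> \<in> carrier (scalar_ring F u)" "\<alpha> \<noteq> \<zero>\<^bsub>scalar_ring F u\<^esub>"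
  then have \<alpha>: "\<alpha> \<in> F" "\<alpha> \<noteq> (\<lambda>x. 0)" by (simp_all add: scalar_ring_def)
  have "\<alpha> \<circ> inv_into UNIV \<alpha> = id"
    using bij_F[OF \<alpha>] by (simp add: fun_eq_iff bij_is_surj surj_f_inv_f)
  then show "\<exists>\<beta>\<in>carrier (scalar_ring F u). \<alpha> \<otimes>\<^bsub>scalar_ring F u\<^esub> \<beta> = \<one>\<^bsub>scalar_ring F u\<^esub>"
    using inv_in_F[OF \<alpha>] by (auto simp: scalar_ring_def)
qed

lemma vector_space_over_u_if_pointwise: "vector_space_over_u F u"
  unfolding vector_space_over_u_def
proof
  show "module (scalar_ring F u) action_module"
    by (rule moduleI[OF cring_scalar_ring abelian_group_action_module])
      (simp_all add: scalar_ring_def action_module_def plus_u_apply F_add)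
qed (rule field_scalar_ring)

end

end

theorem mainTheorem3:
  fixes F :: "('v::group_add \<Rightarrow> 'v) set"
  assumes "near_vector_space F"
    and "F_commutative F"
  shows "(regular F \<longleftrightarrow> (\<forall>u\<in>quasi_kernel F - {0}. vector_space_over_u F u))
         \<and> (regular F \<longrightarrow>
              (\<forall>u\<in>quasi_kernel F - {0}. \<forall>v\<in>quasi_kernel F - {0}.
                 \<forall>\<alpha>\<in>F. \<forall>\<beta>\<in>F. plus_u F u \<alpha> \<beta> = plus_u F v \<alpha> \<beta>))"
proof -
  have gen: "gen_subgroup (quasi_kernel F) = UNIV" and "F_group F"
    using assms(1) unfolding near_vector_space_def by blast+
  then interpret comm_F_group_struct F
    using assms(2) by unfold_locales
  have "vector_space_over_u F u" if "regular F" "u \<in> quasi_kernel F - {0}" for u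
    using vector_space_over_u_if_pointwise regular_plus_u_pointwise[OF gen] that by blast
  then show ?thesis using regular_if_vector_space_over_u regular_plus_u_eq by blast
qed

end
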